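(* Let $\phi:\mathbb{R}^N\to\mathbb{R}$ be a bounded Borel function with $\phi\in C^{1,1}(x)$ and $p_x\neq0$. Then $$\mathcal{L}_s[\phi](x)=\int_0^\infty L_\phi\Big(x,t\frac{p_x}{|p_x|},t\frac{p_x}{|p_x|}\Big)\,\mathrm{d}\mu_s(t).$$
   Context: Fix $N\ge1$ and $s\in(\frac12,1)$. Let $C_s=\frac{4^s s\,\Gamma(\frac12+s)}{\pi^{1/2}\Gamma(1-s)}$. Let $\mu_s$ be the Borel measure on $(0,\infty)$ with $\mathrm{d}\mu_s(t)=C_s t^{-1-2s}\,\mathrm{d}t$. For $\phi:\mathbb{R}^N\to\mathbb{R}$ and $x,y,\tilde y\in\mathbb{R}^N$ let $L_\phi(x,y,\tilde y)=\phi(x+y)+\phi(x-\tilde y)-2\phi(x)$. Define $$\mathcal{L}_s[\phi](x)=\sup_{|y|=1}\inf_{|\tilde y|=1}\int_0^\infty L_\phi(x,ty,t\tilde y)\,\mathrm{d}\mu_s(t),$$ where $\int_0^\infty$ means $\lim_{\delta\to0^+}\int_\delta^\infty$ (a value in $[-\infty,\infty]$). We say $\phi\in C^{1,1}(x)$ if there exist $p_x\in\mathbb{R}^N$ and $C_x,\eta_x>0$ with $|\phi(x+y)-\phi(x)-\langle p_x,y\rangle|\le C_x|y|^2$ for all $|y|<\eta_x$. *)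

theory Defs
  imports "HOL-Analysis.Analysis"
begin

definition C_const :: "real \<Rightarrow> real" where
  "C_const s = (4 powr s * s * Gamma (1/2 + s)) / (sqrt pi * Gamma (1 - s))"

text \<open>Density of mu_s with respect to Lebesgue measure on (0,inf).\<close>
definition mu_density :: "real \<Rightarrow> real \<Rightarrow> real" where
  "mu_density s t = C_const s * t powr (- 1 - 2 * s)"

definition Lphi :: "('a::real_normed_vector \<Rightarrow> real) \<Rightarrow> 'a \<Rightarrow> 'a \<Rightarrow> 'a \<Rightarrow> real" where
  "Lphi \<phi> x y z = \<phi> (x + y) + \<phi> (x - z) - 2 * \<phi> x"

definition pv_integral :: "real \<Rightarrow> (real \<Rightarrow> real) \<Rightarrow> ereal" where
  "pv_integral s f = Lim (at_right 0)
      (\<lambda>\<delta>. ereal (LINT t:{\<delta><..}|lborel. f t * mu_density s t))"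

definition frac_op :: "real \<Rightarrow> ('a::euclidean_space \<Rightarrow> real) \<Rightarrow> 'a \<Rightarrow> ereal" where
  "frac_op s \<phi> x = (SUP y\<in>sphere 0 1. INF z\<in>sphere 0 1.
      pv_integral s (\<lambda>t. Lphi \<phi> x (t *\<^sub>R y) (t *\<^sub>R z)))"

definition C11_at :: "('a::euclidean_space \<Rightarrow> real) \<Rightarrow> 'a \<Rightarrow> 'a \<Rightarrow> bool" where
  "C11_at \<phi> x p \<longleftrightarrow> (\<exists>C \<eta>. C > 0 \<and> \<eta> > 0 \<and>
      (\<forall>y. norm y < \<eta> \<longrightarrow> \<bar>\<phi> (x + y) - \<phi> x - inner p y\<bar> \<le> C * (norm y)\<^sup>2))"

end

theory Submission
  imports Defs "HOL-Real_Asymp.Real_Asymp"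
begin

text \<open>
  Since \<open>\<phi>\<close> is \<open>C\<^sup>1\<^sup>,\<^sup>1\<close> at \<open>x\<close>, for unit vectors \<open>y\<close>, \<open>z\<close> one has
  \<open>L\<^sub>\<phi>(x, t y, t z) = t \<langle>p, y - z\<rangle> + O(t\<^sup>2)\<close> as \<open>t \<rightarrow> 0\<^sup>+\<close>.  Against the density
  \<open>t powr (-1 - 2 s)\<close> a linear germ is not integrable at \<open>0\<close> when \<open>s > 1/2\<close>, while boundedness of
  \<open>\<phi>\<close> makes the tail at infinity harmless; hence the principal value is \<open>+\<infinity>\<close> or \<open>-\<infinity>\<close>
  according to the sign of \<open>\<langle>p, y - z\<rangle>\<close>.  By strict Cauchy--Schwarz, \<open>e = p/|p|\<close> is the
  unique unit vector maximising \<open>\<langle>p, \<cdot>\<rangle>\<close>, so \<open>(e, e)\<close> is a saddle point of the sup--inf: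
  every \<open>z \<noteq> e\<close> gives \<open>+\<infinity>\<close> against \<open>y = e\<close>, and every \<open>y \<noteq> e\<close> gives \<open>-\<infinity>\<close> against \<open>z = e\<close>.
\<close>

lemma has_integral_powr_Ioi:
  fixes a e :: real
  assumes "e < -1" and "a > 0"
  shows "((\<lambda>x. x powr e) has_integral -(a powr (e + 1)) / (e + 1)) {a<..}"
proof (subst has_integral_spike_set_eq)
  show "negligible {x \<in> {a<..} - {a..}. x powr e \<noteq> 0}"
    by (rule negligible_subset[of "{a}"]) auto
  show "negligible {x \<in> {a..} - {a<..}. x powr e \<noteq> 0}"
    by (rule negligible_subset[of "{a}"]) auto
qed (rule has_integral_powr_to_inf[OF assms])

lemma set_integrable_powr_Ioi:
  fixes a e :: real
  assumes "e < -1" and "a > 0"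
  shows "set_integrable lborel {a<..} (\<lambda>x. x powr e)"
proof -
  have "(\<lambda>x. x powr e) absolutely_integrable_on {a<..}"
    using has_integral_powr_Ioi[OF assms]
    by (intro nonnegative_absolutely_integrable_1) (auto simp: integrable_on_def)
  then show ?thesis
    unfolding set_integrable_def by (subst (asm) integrable_completion) auto
qed

lemma set_integral_powr_Ioi:
  fixes a e :: real
  assumes "e < -1" and "a > 0"
  shows "(LINT x:{a<..}|lborel. x powr e) = -(a powr (e + 1)) / (e + 1)"
  using set_borel_integral_eq_integral(2)[OF set_integrable_powr_Ioi[OF assms]]
    has_integral_powr_Ioi[OF assms] by (simp add: integral_unique)

lemma set_integral_Ioi_split:
  fixes g :: "real \<Rightarrow> 'b::{banach, second_countable_topology}"
  assumes "set_integrable lborel {a<..} g" and "a \<le> b"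
  shows "(LINT t:{a<..}|lborel. g t) = (LINT t:{a<..b}|lborel. g t) + (LINT t:{b<..}|lborel. g t)"
proof -
  have "{a<..} = {a<..b} \<union> {b<..}" "{a<..b} \<inter> {b<..} = {}" using assms(2) by auto
  moreover have "set_integrable lborel {a<..b} g" "set_integrable lborel {b<..} g"
    using assms by (auto intro: set_integrable_subset)
  ultimately show ?thesis by (metis set_integral_Un)
qed

lemma C_const_pos: "0 < s \<Longrightarrow> s < 1 \<Longrightarrow> C_const s > 0"
  unfolding C_const_def by (intro divide_pos_pos mult_pos_pos Gamma_real_pos) auto

lemma set_integrable_bounded_mu_density:
  fixes f :: "real \<Rightarrow> real"
  assumes "0 < s" "s < 1" and "f \<in> borel_measurable borel" and "\<And>t. \<bar>f t\<bar> \<le> M" and "0 < \<delta>"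
  shows "set_integrable lborel {\<delta><..} (\<lambda>t. f t * mu_density s t)"
proof (rule set_integrable_bound[where f="\<lambda>t. M * C_const s * t powr (- 1 - 2 * s)"])
  show "set_integrable lborel {\<delta><..} (\<lambda>t. M * C_const s * t powr (- 1 - 2 * s))"
    using set_integrable_powr_Ioi[of "- 1 - 2 * s" \<delta>] assms by (cases "M * C_const s = 0") auto
  show "set_borel_measurable lborel {\<delta><..} (\<lambda>t. f t * mu_density s t)"
    unfolding set_borel_measurable_def mu_density_def using assms(3) by measurable
  have "M \<ge> 0" using assms(4)[of 0] by linarith
  then show "AE t in lborel. t \<in> {\<delta><..} \<longrightarrow>
      norm (f t * mu_density s t) \<le> norm (M * C_const s * t powr (- 1 - 2 * s))"
    using assms C_const_pos[OF assms(1,2)]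
    by (auto simp: mu_density_def abs_mult intro!: mult_right_mono)
qed

lemma mu_tail_integral_tendsto_PInf:
  fixes f :: "real \<Rightarrow> real"
  assumes s: "1/2 < s" "s < 1" and f: "f \<in> borel_measurable borel" "\<And>t. \<bar>f t\<bar> \<le> M"
    and "\<alpha> > 0" and "\<eta> > 0" and lower: "\<And>t. 0 < t \<Longrightarrow> t \<le> \<eta> \<Longrightarrow> \<alpha> * t \<le> f t"
  shows "((\<lambda>\<delta>. ereal (LINT t:{\<delta><..}|lborel. f t * mu_density s t)) \<longlongrightarrow> \<infinity>) (at_right 0)"
proof -
  define c where "c = C_const s"
  define I where "I \<delta> = (LINT t:{\<delta><..}|lborel. f t * mu_density s t)" for \<delta>
  have "c > 0"
    unfolding c_def using s by (intro C_const_pos) auto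
  have integrable: "set_integrable lborel {a<..} (\<lambda>t. f t * mu_density s t)" if "a > 0" for a
    using set_integrable_bounded_mu_density[OF _ _ f that] s by simp
  define B where "B \<delta> = c * \<alpha> * ((\<delta> powr (1 - 2 * s) - \<eta> powr (1 - 2 * s)) / (2 * s - 1)) + I \<eta>" for \<delta>
  have near_zero: "B \<delta> \<le> I \<delta>" if "0 < \<delta>" "\<delta> < \<eta>" for \<delta>
  proof -
    \<comment> \<open>On \<open>(\<delta>, \<eta>]\<close> the integrand dominates \<open>c \<alpha> t powr (-2 s)\<close>, whose integral blows up as \<open>\<delta> \<rightarrow> 0\<close> because \<open>2 s > 1\<close>.\<close>
    have powr_tail: "set_integrable lborel {a<..} (\<lambda>t. t powr (- 2 * s))"
      "(LINT t:{a<..}|lborel. t powr (- 2 * s)) = a powr (1 - 2 * s) / (2 * s - 1)" if "a > 0" for a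
      using set_integrable_powr_Ioi[of "- 2 * s" a] set_integral_powr_Ioi[of "- 2 * s" a] s that
      by (auto simp: minus_divide_right)
    have "c * \<alpha> * ((\<delta> powr (1 - 2 * s) - \<eta> powr (1 - 2 * s)) / (2 * s - 1))
        = (LINT t:{\<delta><..\<eta>}|lborel. c * \<alpha> * t powr (- 2 * s))"
      using set_integral_Ioi_split[OF powr_tail(1)[OF \<open>0 < \<delta>\<close>], of \<eta>] powr_tail[of \<delta>] powr_tail[of \<eta>]
        that \<open>\<eta> > 0\<close> by (simp add: diff_divide_distrib)
    also have "\<dots> \<le> (LINT t:{\<delta><..\<eta>}|lborel. f t * mu_density s t)"
    proof (rule set_integral_mono)
      show "set_integrable lborel {\<delta><..\<eta>} (\<lambda>t. c * \<alpha> * t powr (- 2 * s))"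
        using powr_tail(1)[OF \<open>0 < \<delta>\<close>] by (auto intro: set_integrable_subset)
      show "set_integrable lborel {\<delta><..\<eta>} (\<lambda>t. f t * mu_density s t)"
        using integrable[OF \<open>0 < \<delta>\<close>] by (auto intro: set_integrable_subset)
      fix t assume t: "t \<in> {\<delta><..\<eta>}"
      then have "c * \<alpha> * t powr (- 2 * s) = \<alpha> * t * (c * t powr (- 1 - 2 * s))"
        using that by (simp add: powr_mult_base)
      also have "\<dots> \<le> f t * (c * t powr (- 1 - 2 * s))"
        using lower[of t] \<open>c > 0\<close> t that by (intro mult_right_mono) auto
      finally show "c * \<alpha> * t powr (- 2 * s) \<le> f t * mu_density s t"
        by (simp add: mu_density_def c_def)
    qed
    also have "\<dots> = I \<delta> - I \<eta>"
      using set_integral_Ioi_split[OF integrable[OF \<open>0 < \<delta>\<close>], of \<eta>] that by (simp add: I_def)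
    finally show ?thesis by (simp add: B_def)
  qed
  have "filterlim B at_top (at_right 0)"
    unfolding B_def using \<open>c > 0\<close> \<open>\<alpha> > 0\<close> s by real_asymp
  moreover have "eventually (\<lambda>\<delta>. B \<delta> \<le> I \<delta>) (at_right 0)"
    using near_zero \<open>\<eta> > 0\<close> unfolding eventually_at_right_field by blast
  ultimately show ?thesis
    unfolding tendsto_PInfty_eq_at_top I_def by (rule filterlim_at_top_mono)
qed

lemma mu_tail_integral_tendsto_PInf_of_linear_germ:
  fixes f :: "real \<Rightarrow> real"
  assumes s: "1/2 < s" "s < 1" and f: "f \<in> borel_measurable borel" "\<And>t. \<bar>f t\<bar> \<le> M"
    and "a > 0" and "\<eta> > 0" and germ: "\<And>t. 0 < t \<Longrightarrow> t < \<eta> \<Longrightarrow> \<bar>f t - a * t\<bar> \<le> K * t\<^sup>2"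
  shows "((\<lambda>\<delta>. ereal (LINT t:{\<delta><..}|lborel. f t * mu_density s t)) \<longlongrightarrow> \<infinity>) (at_right 0)"
proof (rule mu_tail_integral_tendsto_PInf[OF s f])
  show "a / 2 > 0" "min (\<eta> / 2) (a / (2 * (\<bar>K\<bar> + 1))) > 0"
    using \<open>a > 0\<close> \<open>\<eta> > 0\<close> by auto
  fix t assume t: "0 < t" "t \<le> min (\<eta> / 2) (a / (2 * (\<bar>K\<bar> + 1)))"
  then have "(\<bar>K\<bar> + 1) * t \<le> a / 2"
    by (simp add: pos_le_divide_eq algebra_simps)
  have "K * t\<^sup>2 \<le> ((\<bar>K\<bar> + 1) * t) * t"
    using mult_right_mono[of K "\<bar>K\<bar> + 1" "t\<^sup>2"] by (simp add: power2_eq_square mult.assoc)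
  also have "\<dots> \<le> a / 2 * t"
    using \<open>(\<bar>K\<bar> + 1) * t \<le> a / 2\<close> t(1) by (intro mult_right_mono) auto
  finally have "K * t\<^sup>2 \<le> a / 2 * t" .
  moreover have "\<bar>f t - a * t\<bar> \<le> K * t\<^sup>2"
    using germ t \<open>\<eta> > 0\<close> by auto
  ultimately show "a / 2 * t \<le> f t" by linarith
qed

lemma pv_integral_eq_PInf_of_linear_germ:
  fixes f :: "real \<Rightarrow> real"
  assumes "1/2 < s" "s < 1" and "f \<in> borel_measurable borel" "\<And>t. \<bar>f t\<bar> \<le> M"
    and "a > 0" and "\<eta> > 0" and "\<And>t. 0 < t \<Longrightarrow> t < \<eta> \<Longrightarrow> \<bar>f t - a * t\<bar> \<le> K * t\<^sup>2"
  shows "pv_integral s f = \<infinity>"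
  unfolding pv_integral_def
  by (rule tendsto_Lim[OF _ mu_tail_integral_tendsto_PInf_of_linear_germ[OF assms]]) simp

lemma pv_integral_eq_MInf_of_linear_germ:
  fixes f :: "real \<Rightarrow> real"
  assumes s: "1/2 < s" "s < 1" and "f \<in> borel_measurable borel" "\<And>t. \<bar>f t\<bar> \<le> M"
    and "a < 0" and "\<eta> > 0" and germ: "\<And>t. 0 < t \<Longrightarrow> t < \<eta> \<Longrightarrow> \<bar>f t - a * t\<bar> \<le> K * t\<^sup>2"
  shows "pv_integral s f = -\<infinity>"
proof -
  have "((\<lambda>\<delta>. ereal (LINT t:{\<delta><..}|lborel. - f t * mu_density s t)) \<longlongrightarrow> \<infinity>) (at_right 0)"
  proof (rule mu_tail_integral_tendsto_PInf_of_linear_germ[OF s, of _ M "- a" \<eta> K])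
    show "\<bar>- f t - - a * t\<bar> \<le> K * t\<^sup>2" if "0 < t" "t < \<eta>" for t
      using germ[OF that] by (simp add: abs_minus_commute)
  qed (use assms in auto)
  then have "((\<lambda>\<delta>. - ereal (LINT t:{\<delta><..}|lborel. - f t * mu_density s t)) \<longlongrightarrow> -\<infinity>) (at_right 0)"
    by (rule tendsto_uminus_ereal)
  moreover have "- ereal (LINT t:{\<delta><..}|lborel. - f t * mu_density s t)
      = ereal (LINT t:{\<delta><..}|lborel. f t * mu_density s t)" for \<delta>
    unfolding set_lebesgue_integral_def by (simp add: integral_minus[symmetric] del: integral_minus)
  ultimately show ?thesis
    unfolding pv_integral_def by (intro tendsto_Lim) auto
qed

lemma C11_at_Lphi_expansion:
  assumes "C11_at \<phi> x p"
  obtains K \<eta> where "\<eta> > 0" and "\<And>y z t. norm y = 1 \<Longrightarrow> norm z = 1 \<Longrightarrow> 0 < t \<Longrightarrow> t < \<eta> \<Longrightarrow>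
      \<bar>Lphi \<phi> x (t *\<^sub>R y) (t *\<^sub>R z) - inner p (y - z) * t\<bar> \<le> 2 * K * t\<^sup>2"
proof -
  obtain K \<eta> where "\<eta> > 0"
    and taylor: "\<And>y. norm y < \<eta> \<Longrightarrow> \<bar>\<phi> (x + y) - \<phi> x - inner p y\<bar> \<le> K * (norm y)\<^sup>2"
    using assms unfolding C11_at_def by blast
  have "\<bar>Lphi \<phi> x (t *\<^sub>R y) (t *\<^sub>R z) - inner p (y - z) * t\<bar> \<le> 2 * K * t\<^sup>2"
    if "norm y = 1" "norm z = 1" "0 < t" "t < \<eta>" for y z t
    using taylor[of "t *\<^sub>R y"] taylor[of "- (t *\<^sub>R z)"] that
    unfolding Lphi_def by (simp add: inner_diff_right algebra_simps)
  with \<open>\<eta> > 0\<close> show ?thesis by (rule that)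
qed

lemma
  fixes \<phi> :: "'a::euclidean_space \<Rightarrow> real"
  assumes s: "1/2 < s" "s < 1" and "\<phi> \<in> borel_measurable borel" and "bounded (range \<phi>)"
    and "C11_at \<phi> x p" and "norm y = 1" "norm z = 1"
  shows pv_integral_Lphi_eq_PInf:
      "inner p (y - z) > 0 \<Longrightarrow> pv_integral s (\<lambda>t. Lphi \<phi> x (t *\<^sub>R y) (t *\<^sub>R z)) = \<infinity>"
    and pv_integral_Lphi_eq_MInf:
      "inner p (y - z) < 0 \<Longrightarrow> pv_integral s (\<lambda>t. Lphi \<phi> x (t *\<^sub>R y) (t *\<^sub>R z)) = -\<infinity>"
proof -
  obtain M where M: "\<And>u. \<bar>\<phi> u\<bar> \<le> M"
    using assms(4) unfolding bounded_iff by auto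
  have "(\<lambda>t. Lphi \<phi> x (t *\<^sub>R y) (t *\<^sub>R z)) \<in> borel_measurable borel"
    using assms(3) unfolding Lphi_def by measurable
  moreover have "\<bar>Lphi \<phi> x (t *\<^sub>R y) (t *\<^sub>R z)\<bar> \<le> 4 * M" for t
    using M[of "x + t *\<^sub>R y"] M[of "x - t *\<^sub>R z"] M[of x] unfolding Lphi_def by linarith
  moreover obtain K \<eta> where "\<eta> > 0" "\<And>t. 0 < t \<Longrightarrow> t < \<eta> \<Longrightarrow>
      \<bar>Lphi \<phi> x (t *\<^sub>R y) (t *\<^sub>R z) - inner p (y - z) * t\<bar> \<le> 2 * K * t\<^sup>2"
    using C11_at_Lphi_expansion[OF assms(5)] assms(6,7) by metis
  ultimately show "inner p (y - z) > 0 \<Longrightarrow> pv_integral s (\<lambda>t. Lphi \<phi> x (t *\<^sub>R y) (t *\<^sub>R z)) = \<infinity>"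
    and "inner p (y - z) < 0 \<Longrightarrow> pv_integral s (\<lambda>t. Lphi \<phi> x (t *\<^sub>R y) (t *\<^sub>R z)) = -\<infinity>"
    using pv_integral_eq_PInf_of_linear_germ[OF s] pv_integral_eq_MInf_of_linear_germ[OF s] by blast+
qed

lemma inner_less_norm_if_unit_ne_sgn:
  fixes p y :: "'a::real_inner"
  assumes "p \<noteq> 0" and "norm y = 1" and "y \<noteq> p /\<^sub>R norm p"
  shows "inner p y < norm p"
proof -
  have "inner p y \<noteq> norm p * norm y"
  proof
    assume "inner p y = norm p * norm y"
    then have "norm p *\<^sub>R y = p"
      using norm_cauchy_schwarz_eq[of p y] assms(2) by simp
    then show False
      using assms by (metis divideR_right norm_eq_zero)
  qed
  then show ?thesis
    using norm_cauchy_schwarz[of p y] assms(2) by simp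
qed

lemma SUP_INF_eq_saddle_point:
  fixes F :: "'a \<Rightarrow> 'a \<Rightarrow> 'b::complete_lattice"
  assumes "e \<in> S" and "\<And>z. z \<in> S \<Longrightarrow> F e e \<le> F e z" and "\<And>y. y \<in> S \<Longrightarrow> F y e \<le> F e e"
  shows "(SUP y\<in>S. INF z\<in>S. F y z) = F e e"
proof (rule antisym)
  show "(SUP y\<in>S. INF z\<in>S. F y z) \<le> F e e"
    using assms by (intro SUP_least) (blast intro: INF_lower2)
  show "F e e \<le> (SUP y\<in>S. INF z\<in>S. F y z)"
    using assms by (intro SUP_upper2[of e] INF_greatest) auto
qed

theorem proposition2p2:
  fixes \<phi> :: "'a::euclidean_space \<Rightarrow> real" and x p :: 'a and s :: real
  assumes "1/2 < s" and "s < 1"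
    and "\<phi> \<in> borel_measurable borel"
    and "bounded (range \<phi>)"
    and "C11_at \<phi> x p"
    and "p \<noteq> 0"
  shows "frac_op s \<phi> x =
    pv_integral s (\<lambda>t. Lphi \<phi> x (t *\<^sub>R (p /\<^sub>R norm p)) (t *\<^sub>R (p /\<^sub>R norm p)))"
proof -
  define e where "e = p /\<^sub>R norm p"
  define F where "F y z = pv_integral s (\<lambda>t. Lphi \<phi> x (t *\<^sub>R y) (t *\<^sub>R z))" for y z
  have e: "norm e = 1" "inner p e = norm p"
    using \<open>p \<noteq> 0\<close> by (simp_all add: e_def power2_norm_eq_inner[symmetric] power2_eq_square)
  have "F e e \<le> F e z" if "norm z = 1" for z
    using pv_integral_Lphi_eq_PInf[OF assms(1-5) e(1) that]
      inner_less_norm_if_unit_ne_sgn[OF \<open>p \<noteq> 0\<close> that] e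
    by (cases "z = e") (auto simp: F_def e_def inner_diff_right)
  moreover have "F y e \<le> F e e" if "norm y = 1" for y
    using pv_integral_Lphi_eq_MInf[OF assms(1-5) that e(1)]
      inner_less_norm_if_unit_ne_sgn[OF \<open>p \<noteq> 0\<close> that] e
    by (cases "y = e") (auto simp: F_def e_def inner_diff_right)
  ultimately have "(SUP y\<in>sphere 0 1. INF z\<in>sphere 0 1. F y z) = F e e"
    using e by (intro SUP_INF_eq_saddle_point) auto
  then show ?thesis
    unfolding frac_op_def F_def e_def .
qed

end
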